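(* Let $(z_n)_{n\ge0}$ be a homogeneous Markov chain on $\mathbb{Z}_+^k$ satisfying assumptions (A1) and (A2) below, with associated maps $p_w$ and distribution process $(x_n)$. If $K\subset S_k$ is a compact set satisfying $$\sup_{x\in K}\sum_w p_w(x)\,\alpha(w)<0,$$ then $P\big[\{L(x_n)\subset K\}\cap\{\lim_{n\to\infty}|z_n|=+\infty\}\big]=0$.
   Context: Fix integers $k\ge1$ and $m\ge1$. For $w\in\mathbb{Z}^k$ put $|w|=\sum_i|w^i|$ and $\alpha(w)=\sum_i w^i$. $\mathbb{Z}_+^k=\{z\in\mathbb{Z}^k: z^i\ge0\ \forall i\}$, $S_k=\{x\in\mathbb{R}^k: x^i\ge0,\ \sum_i x^i=1\}$. $(z_n)$ has transition kernel $\Pi(z,z')=P[z_{n+1}=z'\mid z_n=z]$; $x_n=z_n/|z_n|$ if $z_n\neq0$ and $x_n=0$ otherwise. (A1) $|z_{n+1}-z_n|\le m$ for all $n$. (A2) There exist Lipschitz maps $p_w:S_k\to[0,1]$, $w\in\mathbb{Z}^k$, $|w|\le m$, and $a>0$ with $|p_w(z/|z|)-\Pi(z,z+w)|\le a/|z|$ for all nonzero $z\in\mathbb{Z}_+^k$ and $|w|\le m$. Sums over $w$ range over $w\in\mathbb{Z}^k$ with $|w|\le m$. $L(x_n)$ denotes the set of limit points of the sequence $(x_n)$. *)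

theory Defs
  imports "HOL-Analysis.Analysis" "HOL-Probability.Probability"
begin

text \<open>Lattice points are elements of int^'k; the dimension is k = CARD('k).\<close>

definition norm1 :: "int ^ 'k::finite \<Rightarrow> int" where
  "norm1 w = (\<Sum>i\<in>UNIV. \<bar>w $ i\<bar>)"

definition alpha :: "int ^ 'k::finite \<Rightarrow> int" where
  "alpha w = (\<Sum>i\<in>UNIV. w $ i)"

definition Zplus :: "(int ^ 'k::finite) set" where
  "Zplus = {z. \<forall>i. 0 \<le> z $ i}"

definition std_simplex_k :: "(real ^ 'k::finite) set" where
  "std_simplex_k = {x. (\<forall>i. 0 \<le> x $ i) \<and> (\<Sum>i\<in>UNIV. x $ i) = 1}"

definition distrib :: "int ^ 'k::finite \<Rightarrow> real ^ 'k" where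
  "distrib z = (if z = 0 then 0
                else (1 / real_of_int (norm1 z)) *\<^sub>R (\<chi> i. real_of_int (z $ i)))"

definition limit_points :: "(nat \<Rightarrow> 'a::topological_space) \<Rightarrow> 'a set" where
  "limit_points X = {l. \<exists>r. strict_mono r \<and> (X \<circ> r) \<longlonglongrightarrow> l}"

end

theory Submission
  imports Defs
begin

(* Near infinity and near K, (A2) and the Lipschitz continuity of the p_w make the one-step drift
   of alpha(z_n) = |z_n| at most c/2 < 0; since the jumps are bounded by m, exp(theta alpha) is then
   superharmonic on this region G for a small theta > 0. On the event in question the chain
   eventually stays in G while exp(theta |z_n|) tends to infinity. But stopping F(z_n) at the exit
   from G turns a superharmonic F into a nonnegative supermartingale, whose liminf is almost surely
   finite by Fatou's lemma. *)

section \<open>Lattice points and the simplex\<close>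

lemma abs_component_le_norm1: "\<bar>w $ i\<bar> \<le> norm1 w"
  unfolding norm1_def by (rule member_le_sum) auto

lemma norm1_ge_1: "y \<noteq> 0 \<Longrightarrow> 1 \<le> norm1 y"
  by (metis abs_component_le_norm1 order_trans vec_eq_iff zero_index zero_less_abs_iff int_one_le_iff_zero_less)

lemma finite_norm1_le: "finite {w :: int ^ 'k::finite. norm1 w \<le> r}"
proof -
  have "{w :: int ^ 'k. norm1 w \<le> r} \<subseteq> vec_lambda ` (PiE UNIV (\<lambda>_. {-r..r}))"
  proof
    fix w :: "int ^ 'k" assume "w \<in> {w. norm1 w \<le> r}"
    then have "\<bar>w $ i\<bar> \<le> r" for i
      using abs_component_le_norm1[of w i] by simp
    then have "vec_nth w \<in> PiE UNIV (\<lambda>_. {-r..r})"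
      by (auto simp: abs_le_iff minus_le_iff)
    then show "w \<in> vec_lambda ` PiE UNIV (\<lambda>_. {-r..r})"
      by (intro image_eqI[of _ _ "vec_nth w"]) auto
  qed
  then show ?thesis
    by (rule finite_subset) (intro finite_imageI finite_PiE; simp)
qed

lemma alpha_add: "alpha (y + w) = alpha y + alpha w"
  by (simp add: alpha_def sum.distrib)

lemma abs_alpha_le_norm1: "\<bar>alpha w\<bar> \<le> norm1 w"
  unfolding alpha_def norm1_def by (rule sum_abs)

lemma alpha_eq_norm1: "y \<in> Zplus \<Longrightarrow> alpha y = norm1 y"
  unfolding alpha_def norm1_def Zplus_def by (intro sum.cong) auto

lemma distrib_in_std_simplex:
  assumes "y \<in> Zplus" "y \<noteq> 0"
  shows "distrib y \<in> std_simplex_k"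
proof -
  have pos: "0 < real_of_int (norm1 y)" using norm1_ge_1[OF assms(2)] by simp
  have "real_of_int (norm1 y) = (\<Sum>i\<in>UNIV. real_of_int (y $ i))"
    using alpha_eq_norm1[OF assms(1)] unfolding alpha_def by (metis of_int_sum)
  then have "(\<Sum>i\<in>UNIV. real_of_int (y $ i) / real_of_int (norm1 y)) = 1"
    using pos by (simp add: sum_divide_distrib[symmetric])
  then show ?thesis
    using assms pos unfolding std_simplex_k_def distrib_def Zplus_def by auto
qed

lemma compact_std_simplex: "compact (std_simplex_k :: (real ^ 'k::finite) set)"
proof (subst compact_eq_bounded_closed, intro conjI)
  show "bounded (std_simplex_k :: (real ^ 'k) set)"
    unfolding bounded_iff
  proof (intro exI ballI)
    fix x :: "real ^ 'k" assume "x \<in> std_simplex_k"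
    then have "(\<Sum>i\<in>UNIV. \<bar>x $ i\<bar>) = 1" unfolding std_simplex_k_def by auto
    then show "norm x \<le> 1" using norm_le_l1_cart[of x] by simp
  qed
  have "continuous_on UNIV (\<lambda>x::real ^ 'k. \<Sum>i\<in>UNIV. x $ i)"
    by (intro continuous_intros)
  then have "closed {x::real ^ 'k. (\<Sum>i\<in>UNIV. x $ i) = 1}"
    by (rule closed_Collect_eq) (rule continuous_on_const)
  then have "closed ({x :: real ^ 'k. \<forall>i. 0 \<le> x $ i} \<inter> {x. (\<Sum>i\<in>UNIV. x $ i) = 1})"
    by (rule closed_Int[OF closed_positive_orthant])
  moreover have "std_simplex_k = {x :: real ^ 'k. \<forall>i. 0 \<le> x $ i} \<inter> {x. (\<Sum>i\<in>UNIV. x $ i) = 1}"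
    unfolding std_simplex_k_def by auto
  ultimately show "closed (std_simplex_k :: (real ^ 'k) set)" by simp
qed

section \<open>Exponential moments under negative drift\<close>

lemma exp_le_1_plus_sq:
  fixes t :: real
  assumes "\<bar>t\<bar> \<le> 1"
  shows "exp t \<le> 1 + t + t\<^sup>2"
proof (cases "0 \<le> t")
  case True
  then show ?thesis using exp_bound assms by auto
next
  case False
  define s where "s = - t"
  have s: "0 < s" "s \<le> 1" using False assms by (auto simp: s_def)
  have "exp t \<le> 1 / (1 + s)"
    using exp_ge_add_one_self[of s] s by (simp add: s_def exp_minus field_simps)
  also have "\<dots> \<le> 1 - s + s\<^sup>2" using s by (simp add: field_simps power2_eq_square)
  finally show ?thesis by (simp add: s_def)
qed

lemma sum_exp_le_1_of_negative_mean:
  fixes P A :: "'w \<Rightarrow> real"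
  assumes "finite W" and P_nonneg: "\<And>w. w \<in> W \<Longrightarrow> 0 \<le> P w" and P_sum: "sum P W = 1"
    and mean: "(\<Sum>w\<in>W. P w * A w) \<le> - d" and A_bound: "\<And>w. w \<in> W \<Longrightarrow> \<bar>A w\<bar> \<le> b"
    and \<theta>: "0 < \<theta>" "\<theta> * b \<le> 1" "\<theta> * b\<^sup>2 \<le> d"
  shows "(\<Sum>w\<in>W. P w * exp (\<theta> * A w)) \<le> 1"
proof -
  have exp_le: "exp (\<theta> * A w) \<le> 1 + \<theta> * A w + \<theta> * d" if "w \<in> W" for w
  proof -
    have "\<bar>\<theta> * A w\<bar> \<le> \<theta> * b"
      using A_bound[OF that] \<theta>(1) by (simp add: abs_mult)
    then have "exp (\<theta> * A w) \<le> 1 + \<theta> * A w + (\<theta> * A w)\<^sup>2"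
      using \<theta>(2) by (intro exp_le_1_plus_sq) linarith
    moreover have "(\<theta> * A w)\<^sup>2 \<le> \<theta> * (\<theta> * b\<^sup>2)"
    proof -
      have "\<bar>A w\<bar>\<^sup>2 \<le> b\<^sup>2" using A_bound[OF that] by (intro power_mono) auto
      then show ?thesis using \<theta>(1) by (simp add: power_mult_distrib power2_eq_square)
    qed
    moreover have "\<theta> * (\<theta> * b\<^sup>2) \<le> \<theta> * d"
      using \<theta> by (intro mult_left_mono) auto
    ultimately show ?thesis by linarith
  qed
  have "(\<Sum>w\<in>W. P w * exp (\<theta> * A w)) \<le> (\<Sum>w\<in>W. P w * (1 + \<theta> * A w + \<theta> * d))"
    using exp_le P_nonneg by (intro sum_mono mult_left_mono) auto
  also have "\<dots> = sum P W + \<theta> * (\<Sum>w\<in>W. P w * A w) + \<theta> * d * sum P W"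
    by (simp add: algebra_simps sum.distrib sum_distrib_left sum_distrib_right)
  also have "\<dots> \<le> 1"
    using mult_left_mono[OF mean, of \<theta>] \<theta>(1) P_sum by simp
  finally show ?thesis .
qed

lemma exists_tilt:
  fixes b d :: real
  assumes "0 < b" "0 < d"
  shows "\<exists>\<theta>>0. \<theta> * b \<le> 1 \<and> \<theta> * b\<^sup>2 \<le> d"
proof (intro exI conjI)
  let ?\<theta> = "min (1 / b) (d / b\<^sup>2)"
  show "0 < ?\<theta>" using assms by simp
  show "?\<theta> * b \<le> 1" using assms pos_le_divide_eq[of b ?\<theta> 1] by simp
  show "?\<theta> * b\<^sup>2 \<le> d" using assms pos_le_divide_eq[of "b\<^sup>2" ?\<theta> d] by simp
qed

lemma vanishes_off_steps:
  assumes "\<And>y'. int m < norm1 (y' - y) \<Longrightarrow> q y' = 0" and "y' \<notin> (+) y ` {w. norm1 w \<le> int m}"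
  shows "q y' = 0"
proof (rule assms(1))
  have "y' - y \<notin> {w. norm1 w \<le> int m}"
    using assms(2) by (metis add.commute diff_add_cancel image_eqI)
  then show "int m < norm1 (y' - y)" by simp
qed

lemma sum_steps_eq_1:
  fixes q :: "int ^ 'k::finite \<Rightarrow> real"
  assumes "(q has_sum 1) UNIV" and local: "\<And>y'. int m < norm1 (y' - y) \<Longrightarrow> q y' = 0"
  shows "(\<Sum>w\<in>{w. norm1 w \<le> int m}. q (y + w)) = 1"
proof -
  have "(\<Sum>w\<in>{w. norm1 w \<le> int m}. q (y + w)) = sum q ((+) y ` {w. norm1 w \<le> int m})"
    by (simp add: sum.reindex inj_on_def)
  also have "\<dots> = infsum q ((+) y ` {w. norm1 w \<le> int m})"
    by (rule infsum_finite[symmetric]) (simp add: finite_norm1_le)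
  also have "\<dots> = infsum q UNIV"
    by (rule infsum_cong_neutral) (auto intro: vanishes_off_steps[where q=q, OF local])
  also have "\<dots> = 1" using assms(1) by (rule infsumI)
  finally show ?thesis .
qed

lemma nn_integral_steps:
  fixes q :: "int ^ 'k::finite \<Rightarrow> real"
  assumes local: "\<And>y'. int m < norm1 (y' - y) \<Longrightarrow> q y' = 0"
  shows "(\<integral>\<^sup>+y'. ennreal (q y') * f y' \<partial>count_space UNIV)
    = (\<Sum>w\<in>{w. norm1 w \<le> int m}. ennreal (q (y + w)) * f (y + w))"
proof -
  have "(\<integral>\<^sup>+y'. ennreal (q y') * f y' \<partial>count_space UNIV)
      = (\<Sum>y'\<in>(+) y ` {w. norm1 w \<le> int m}. ennreal (q y') * f y')"
  proof (rule nn_integral_count_space')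
    show "ennreal (q y') * f y' = 0" if "y' \<notin> (+) y ` {w. norm1 w \<le> int m}" for y'
      using vanishes_off_steps[where q=q, OF local that] by simp
  qed (simp_all add: finite_norm1_le)
  then show ?thesis by (simp add: sum.reindex inj_on_def)
qed

lemma exp_alpha_superharmonic:
  fixes q :: "int ^ 'k::finite \<Rightarrow> real"
  assumes q_nonneg: "\<And>y'. 0 \<le> q y'" and q_sum: "(q has_sum 1) UNIV"
    and q_local: "\<And>y'. int m < norm1 (y' - y) \<Longrightarrow> q y' = 0"
    and drift: "(\<Sum>w\<in>{w. norm1 w \<le> int m}. q (y + w) * real_of_int (alpha w)) \<le> - d"
    and \<theta>: "0 < \<theta>" "\<theta> * real m \<le> 1" "\<theta> * (real m)\<^sup>2 \<le> d"
  shows "(\<integral>\<^sup>+y'. ennreal (q y') * ennreal (exp (\<theta> * real_of_int (alpha y'))) \<partial>count_space UNIV)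
    \<le> ennreal (exp (\<theta> * real_of_int (alpha y)))"
proof -
  define W where "W = {w :: int ^ 'k. norm1 w \<le> int m}"
  have A_bound: "\<bar>real_of_int (alpha w)\<bar> \<le> real m" if "w \<in> W" for w
    using abs_alpha_le_norm1[of w] that unfolding W_def by (simp add: abs_le_iff)
  have tilt: "(\<Sum>w\<in>W. q (y + w) * exp (\<theta> * real_of_int (alpha w))) \<le> 1"
    by (rule sum_exp_le_1_of_negative_mean[OF _ q_nonneg _ _ A_bound \<theta>])
      (use sum_steps_eq_1[OF q_sum q_local] drift finite_norm1_le in \<open>simp_all add: W_def\<close>)
  have "(\<integral>\<^sup>+y'. ennreal (q y') * ennreal (exp (\<theta> * real_of_int (alpha y'))) \<partial>count_space UNIV)
      = (\<Sum>w\<in>W. ennreal (q (y + w)) * ennreal (exp (\<theta> * real_of_int (alpha (y + w)))))"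
    unfolding W_def by (rule nn_integral_steps) (rule q_local)
  also have "\<dots> = ennreal (\<Sum>w\<in>W. q (y + w) * exp (\<theta> * real_of_int (alpha (y + w))))"
    by (subst sum_ennreal[symmetric]) (simp_all add: q_nonneg ennreal_mult)
  also have "\<dots> = ennreal (exp (\<theta> * real_of_int (alpha y))
      * (\<Sum>w\<in>W. q (y + w) * exp (\<theta> * real_of_int (alpha w))))"
    by (simp add: alpha_add distrib_left exp_add sum_distrib_left mult_ac)
  also have "\<dots> \<le> ennreal (exp (\<theta> * real_of_int (alpha y)))"
    using tilt by (intro ennreal_leI) simp
  finally show ?thesis .
qed

section \<open>Negative drift near K\<close>

lemma drift_perturbation:
  fixes Pi :: "int ^ 'k::finite \<Rightarrow> int ^ 'k \<Rightarrow> real"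
    and p :: "int ^ 'k \<Rightarrow> real ^ 'k \<Rightarrow> real"
  assumes W: "\<And>w. w \<in> W \<Longrightarrow> norm1 w \<le> int m"
    and y: "y \<in> Zplus" "y \<noteq> 0" and x: "x \<in> std_simplex_k"
    and C: "\<And>w. w \<in> W \<Longrightarrow> (C w)-lipschitz_on std_simplex_k (p w)"
    and A2: "\<And>w. w \<in> W \<Longrightarrow> \<bar>p w (distrib y) - Pi y (y + w)\<bar> \<le> a / real_of_int (norm1 y)"
  shows "(\<Sum>w\<in>W. Pi y (y + w) * real_of_int (alpha w))
    \<le> (\<Sum>w\<in>W. p w x * real_of_int (alpha w)) + real (card W) * real m * a / real_of_int (norm1 y)
       + (\<Sum>w\<in>W. \<bar>C w\<bar>) * real m * dist (distrib y) x"
proof -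
  have term_le: "Pi y (y + w) * real_of_int (alpha w) \<le> p w x * real_of_int (alpha w)
      + real m * a / real_of_int (norm1 y) + \<bar>C w\<bar> * real m * dist (distrib y) x"
    if w: "w \<in> W" for w
  proof -
    have "\<bar>p w (distrib y) - p w x\<bar> \<le> C w * dist (distrib y) x"
      using lipschitz_onD[OF C[OF w] distrib_in_std_simplex[OF y] x] by (simp add: dist_real_def)
    also have "\<dots> \<le> \<bar>C w\<bar> * dist (distrib y) x" by (intro mult_right_mono) auto
    finally have "\<bar>Pi y (y + w) - p w x\<bar> \<le> a / real_of_int (norm1 y) + \<bar>C w\<bar> * dist (distrib y) x"
      using A2[OF w] by linarith
    moreover have "\<bar>real_of_int (alpha w)\<bar> \<le> real m"
      using abs_alpha_le_norm1[of w] W[OF w] by linarith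
    ultimately have "\<bar>(Pi y (y + w) - p w x) * real_of_int (alpha w)\<bar>
        \<le> (a / real_of_int (norm1 y) + \<bar>C w\<bar> * dist (distrib y) x) * real m"
      unfolding abs_mult by (intro mult_mono) auto
    then show ?thesis by (simp add: algebra_simps)
  qed
  have "(\<Sum>w\<in>W. Pi y (y + w) * real_of_int (alpha w)) \<le> (\<Sum>w\<in>W. p w x * real_of_int (alpha w)
      + real m * a / real_of_int (norm1 y) + \<bar>C w\<bar> * real m * dist (distrib y) x)"
    by (intro sum_mono term_le)
  then show ?thesis by (simp add: sum.distrib sum_distrib_right)
qed

lemma drift_negative_near_K:
  fixes Pi :: "int ^ 'k::finite \<Rightarrow> int ^ 'k \<Rightarrow> real"
    and p :: "int ^ 'k \<Rightarrow> real ^ 'k \<Rightarrow> real"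
  assumes p_lip: "\<And>w. norm1 w \<le> int m \<Longrightarrow> \<exists>C. C-lipschitz_on std_simplex_k (p w)"
    and a_pos: "0 < a"
    and A2: "\<And>y w. y \<in> Zplus \<Longrightarrow> y \<noteq> 0 \<Longrightarrow> norm1 w \<le> int m \<Longrightarrow>
        \<bar>p w (distrib y) - Pi y (y + w)\<bar> \<le> a / real_of_int (norm1 y)"
    and K_sub: "K \<subseteq> std_simplex_k"
    and c: "c < 0" "\<forall>x\<in>K. (\<Sum>w\<in>{w. norm1 w \<le> int m}. p w x * real_of_int (alpha w)) \<le> c"
  shows "\<exists>\<delta>>0. \<exists>R. \<forall>y\<in>Zplus. R \<le> real_of_int (norm1 y) \<longrightarrow> (\<exists>x\<in>K. dist (distrib y) x < \<delta>) \<longrightarrow>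
      (\<Sum>w\<in>{w. norm1 w \<le> int m}. Pi y (y + w) * real_of_int (alpha w)) \<le> c / 2"
proof -
  define W where "W = {w :: int ^ 'k. norm1 w \<le> int m}"
  have "\<forall>w\<in>W. \<exists>C. C-lipschitz_on std_simplex_k (p w)" using p_lip unfolding W_def by blast
  then obtain C where C: "\<And>w. w \<in> W \<Longrightarrow> (C w)-lipschitz_on std_simplex_k (p w)" by metis
  \<comment> \<open>\<open>R\<close> and \<open>\<delta>\<close> make each error term of \<open>drift_perturbation\<close> at most \<open>-c/4\<close>.\<close>
  define B where "B = (\<Sum>w\<in>W. \<bar>C w\<bar>) * real m + 1"
  have B: "0 < B" unfolding B_def by (simp add: sum_nonneg add_nonneg_pos)
  define \<delta> where "\<delta> = - c / (4 * B)"
  define R where "R = 4 * real (card W) * real m * a / (- c) + 1"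
  have R: "1 \<le> R" unfolding R_def using a_pos c(1) by (simp add: divide_nonneg_neg)
  have "0 < \<delta>" unfolding \<delta>_def using B c(1) by (simp add: divide_neg_pos)
  moreover have "(\<Sum>w\<in>{w. norm1 w \<le> int m}. Pi y (y + w) * real_of_int (alpha w)) \<le> c / 2"
    if y: "y \<in> Zplus" "R \<le> real_of_int (norm1 y)" "\<exists>x\<in>K. dist (distrib y) x < \<delta>" for y
  proof -
    obtain x where x: "x \<in> K" "dist (distrib y) x < \<delta>" using y(3) by blast
    have y0: "y \<noteq> 0" using y(2) R by (auto simp: norm1_def)
    have "real (card W) * real m * a / real_of_int (norm1 y) \<le> real (card W) * real m * a / R"
      using R y(2) a_pos by (intro divide_left_mono) auto
    also have "\<dots> \<le> - c / 4"
      using R c(1) unfolding R_def by (simp add: field_simps)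
    finally have large: "real (card W) * real m * a / real_of_int (norm1 y) \<le> - c / 4" .
    have "(\<Sum>w\<in>W. \<bar>C w\<bar>) * real m * dist (distrib y) x \<le> B * \<delta>"
      using x(2) unfolding B_def by (intro mult_mono) auto
    also have "\<dots> = - c / 4" unfolding \<delta>_def using B by simp
    finally have near: "(\<Sum>w\<in>W. \<bar>C w\<bar>) * real m * dist (distrib y) x \<le> - c / 4" .
    have "(\<Sum>w\<in>W. Pi y (y + w) * real_of_int (alpha w))
      \<le> (\<Sum>w\<in>W. p w x * real_of_int (alpha w)) + real (card W) * real m * a / real_of_int (norm1 y)
         + (\<Sum>w\<in>W. \<bar>C w\<bar>) * real m * dist (distrib y) x"
      using K_sub x(1) by (intro drift_perturbation[OF _ y(1) y0 _ C]) (auto simp: W_def A2 y(1) y0)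
    moreover have "(\<Sum>w\<in>W. p w x * real_of_int (alpha w)) \<le> c" using c(2) x(1) unfolding W_def by blast
    ultimately show ?thesis using large near unfolding W_def by linarith
  qed
  ultimately show ?thesis by blast
qed

lemma exp_alpha_superharmonic_near_K:
  fixes Pi :: "int ^ 'k::finite \<Rightarrow> int ^ 'k \<Rightarrow> real"
    and p :: "int ^ 'k \<Rightarrow> real ^ 'k \<Rightarrow> real"
  assumes kernel_nonneg: "\<And>y y'. 0 \<le> Pi y y'"
    and kernel_sum: "\<And>y. y \<in> Zplus \<Longrightarrow> (Pi y has_sum 1) UNIV"
    and m_pos: "1 \<le> m"
    and p_lip: "\<And>w. norm1 w \<le> int m \<Longrightarrow> \<exists>C. C-lipschitz_on std_simplex_k (p w)"
    and a_pos: "0 < a"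
    and A2: "\<And>y w. y \<in> Zplus \<Longrightarrow> y \<noteq> 0 \<Longrightarrow> norm1 w \<le> int m \<Longrightarrow>
        \<bar>p w (distrib y) - Pi y (y + w)\<bar> \<le> a / real_of_int (norm1 y)"
    and K_sub: "K \<subseteq> std_simplex_k"
    and drift: "\<exists>c<0. \<forall>x\<in>K. (\<Sum>w\<in>{w. norm1 w \<le> int m}. p w x * real_of_int (alpha w)) \<le> c"
  shows "\<exists>\<theta>>0. \<exists>\<delta>>0. \<exists>R. \<forall>y\<in>Zplus. R \<le> real_of_int (norm1 y) \<longrightarrow> (\<exists>x\<in>K. dist (distrib y) x < \<delta>) \<longrightarrow>
    (\<forall>y'. \<not> norm1 (y' - y) \<le> int m \<longrightarrow> Pi y y' = 0) \<longrightarrow>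
    (\<integral>\<^sup>+y'. ennreal (Pi y y') * ennreal (exp (\<theta> * real_of_int (alpha y'))) \<partial>count_space UNIV)
      \<le> ennreal (exp (\<theta> * real_of_int (alpha y)))"
proof -
  obtain c where c: "c < 0" "\<forall>x\<in>K. (\<Sum>w\<in>{w. norm1 w \<le> int m}. p w x * real_of_int (alpha w)) \<le> c"
    using drift by blast
  obtain \<delta> R where \<delta>: "0 < \<delta>" and drift_near: "\<forall>y\<in>Zplus. R \<le> real_of_int (norm1 y) \<longrightarrow>
      (\<exists>x\<in>K. dist (distrib y) x < \<delta>) \<longrightarrow>
      (\<Sum>w\<in>{w. norm1 w \<le> int m}. Pi y (y + w) * real_of_int (alpha w)) \<le> - (- c / 2)"
    using drift_negative_near_K[OF p_lip a_pos A2 K_sub c] by auto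
  obtain \<theta> where \<theta>: "0 < \<theta>" "\<theta> * real m \<le> 1" "\<theta> * (real m)\<^sup>2 \<le> - c / 2"
    using exists_tilt[of "real m" "- c / 2"] m_pos c(1) by auto
  have "(\<integral>\<^sup>+y'. ennreal (Pi y y') * ennreal (exp (\<theta> * real_of_int (alpha y'))) \<partial>count_space UNIV)
      \<le> ennreal (exp (\<theta> * real_of_int (alpha y)))"
    if "y \<in> Zplus" "R \<le> real_of_int (norm1 y)" "\<exists>x\<in>K. dist (distrib y) x < \<delta>"
      and "\<forall>y'. \<not> norm1 (y' - y) \<le> int m \<longrightarrow> Pi y y' = 0" for y
    using that drift_near
    by (intro exp_alpha_superharmonic[OF kernel_nonneg kernel_sum _ _ \<theta>]) (simp_all add: not_le[symmetric])
  with \<theta>(1) \<delta> show ?thesis by blast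
qed

section \<open>Paths with limit points in K\<close>

lemma eventually_near_of_limit_points_subset:
  fixes X :: "nat \<Rightarrow> 'a::metric_space"
  assumes S: "compact S" "\<forall>\<^sub>F n in sequentially. X n \<in> S"
    and K: "limit_points X \<subseteq> K" and \<delta>: "0 < \<delta>"
  shows "\<forall>\<^sub>F n in sequentially. \<exists>x\<in>K. dist (X n) x < \<delta>"
proof (rule ccontr)
  assume not_near: "\<not> ?thesis"
  have "\<not> (\<forall>\<^sub>F n in sequentially. X n \<in> S \<longrightarrow> (\<exists>x\<in>K. dist (X n) x < \<delta>))"
  proof
    assume "\<forall>\<^sub>F n in sequentially. X n \<in> S \<longrightarrow> (\<exists>x\<in>K. dist (X n) x < \<delta>)"
    with S(2) have "\<forall>\<^sub>F n in sequentially. \<exists>x\<in>K. dist (X n) x < \<delta>"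
      by eventually_elim blast
    with not_near show False ..
  qed
  then obtain r :: "nat \<Rightarrow> nat" where r: "strict_mono r"
    and far: "\<And>n. X (r n) \<in> S \<and> \<not> (\<exists>x\<in>K. dist (X (r n)) x < \<delta>)"
    using not_eventually_sequentiallyD by blast
  have "\<forall>n. (X \<circ> r) n \<in> S" using far by simp
  then obtain l r' where r': "strict_mono r'" and lim: "((X \<circ> r) \<circ> r') \<longlonglongrightarrow> l"
    using seq_compactE[OF compact_imp_seq_compact[OF S(1)]] by blast
  have "l \<in> K"
    using K strict_mono_o[OF r r'] lim unfolding limit_points_def comp_assoc by blast
  moreover obtain n where "dist (X (r (r' n))) l < \<delta>"
    using tendstoD[OF lim \<delta>] by (auto simp: eventually_sequentially)
  ultimately show False using far by blast
qed

lemma eventually_large_near_K: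
  assumes y: "\<And>n. y n \<in> Zplus" and lim: "filterlim (\<lambda>n. norm1 (y n)) at_top sequentially"
    and K: "limit_points (\<lambda>n. distrib (y n)) \<subseteq> K" and \<delta>: "0 < \<delta>"
  shows "\<forall>\<^sub>F n in sequentially.
    y n \<in> {y \<in> Zplus. R \<le> real_of_int (norm1 y) \<and> (\<exists>x\<in>K. dist (distrib y) x < \<delta>)}"
proof -
  have large: "\<forall>\<^sub>F n in sequentially. max 1 R \<le> real_of_int (norm1 (y n))"
    using filterlim_compose[OF filterlim_real_of_int_at_top lim] unfolding filterlim_at_top by blast
  then have "\<forall>\<^sub>F n in sequentially. distrib (y n) \<in> std_simplex_k"
    by eventually_elim (use y in \<open>auto intro!: distrib_in_std_simplex simp: norm1_def\<close>)
  then have "\<forall>\<^sub>F n in sequentially. \<exists>x\<in>K. dist (distrib (y n)) x < \<delta>"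
    using eventually_near_of_limit_points_subset[OF compact_std_simplex _ K \<delta>] by blast
  with large show ?thesis by eventually_elim (auto simp: y)
qed

lemma exp_alpha_tendsto_top:
  assumes y: "\<And>n. y n \<in> Zplus" and lim: "filterlim (\<lambda>n. norm1 (y n)) at_top sequentially"
    and \<theta>: "0 < \<theta>"
  shows "(\<lambda>n. ennreal (exp (\<theta> * real_of_int (alpha (y n))))) \<longlonglongrightarrow> \<top>"
proof -
  have "filterlim (\<lambda>n. \<theta> * real_of_int (norm1 (y n))) at_top sequentially"
    using filterlim_compose[OF filterlim_real_of_int_at_top lim]
    by (rule filterlim_tendsto_pos_mult_at_top[OF tendsto_const \<theta>])
  then have "filterlim (\<lambda>n. exp (\<theta> * real_of_int (alpha (y n)))) at_top sequentially"
    by (simp add: alpha_eq_norm1[OF y] filterlim_compose[OF exp_at_top])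
  then show ?thesis by (simp add: ennreal_tendsto_top_eq_at_top)
qed

section \<open>Superharmonic functions of a countable Markov chain\<close>

definition history :: "(nat \<Rightarrow> 'a \<Rightarrow> 'b) \<Rightarrow> nat \<Rightarrow> 'a \<Rightarrow> 'b list" where
  "history z n \<omega> = map (\<lambda>i. z i \<omega>) [0..<Suc n]"

lemma last_eq_nth_of_length: "length xs = Suc n \<Longrightarrow> last xs = xs ! n"
  by (cases xs rule: rev_cases) auto

lemma length_history[simp]: "length (history z n \<omega>) = Suc n"
  by (simp add: history_def)

lemma nth_history: "i \<le> n \<Longrightarrow> history z n \<omega> ! i = z i \<omega>"
  unfolding history_def by (simp add: nth_upt less_Suc_eq_le del: upt_Suc)

lemma last_history: "last (history z n \<omega>) = z n \<omega>"
  by (simp add: last_eq_nth_of_length nth_history)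

lemma history_eq_iff: "length l = Suc n \<Longrightarrow> history z n \<omega> = l \<longleftrightarrow> (\<forall>i\<le>n. z i \<omega> = l ! i)"
  by (auto simp: list_eq_iff_nth_eq nth_history less_Suc_eq_le)

lemma nn_integral_split_countable:
  fixes X :: "'a \<Rightarrow> 'b::countable"
  assumes [measurable]: "X \<in> measurable M (count_space UNIV)" "f \<in> borel_measurable M"
  shows "(\<integral>\<^sup>+\<omega>. f \<omega> * indicator {\<omega>\<in>space M. X \<omega> \<in> H} \<omega> \<partial>M)
    = (\<integral>\<^sup>+x. indicator H x * (\<integral>\<^sup>+\<omega>. f \<omega> * indicator {\<omega>\<in>space M. X \<omega> = x} \<omega> \<partial>M) \<partial>count_space UNIV)"
proof -
  have "(\<integral>\<^sup>+x. indicator H x * (\<integral>\<^sup>+\<omega>. f \<omega> * indicator {\<omega>\<in>space M. X \<omega> = x} \<omega> \<partial>M) \<partial>count_space UNIV)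
      = (\<integral>\<^sup>+x. (\<integral>\<^sup>+\<omega>. indicator H x * f \<omega> * indicator {\<omega>\<in>space M. X \<omega> = x} \<omega> \<partial>M) \<partial>count_space UNIV)"
    by (intro nn_integral_cong) (simp add: nn_integral_cmult mult.assoc)
  also have "\<dots> = (\<integral>\<^sup>+\<omega>. (\<integral>\<^sup>+x. indicator H x * f \<omega> * indicator {\<omega>\<in>space M. X \<omega> = x} \<omega> \<partial>count_space UNIV) \<partial>M)"
    by (rule nn_integral_count_space_nn_integral[symmetric]) auto
  also have "\<dots> = (\<integral>\<^sup>+\<omega>. f \<omega> * indicator {\<omega>\<in>space M. X \<omega> \<in> H} \<omega> \<partial>M)"
  proof (rule nn_integral_cong)
    fix \<omega> assume \<omega>: "\<omega> \<in> space M"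
    then have "(\<integral>\<^sup>+x. indicator H x * f \<omega> * indicator {\<omega>\<in>space M. X \<omega> = x} \<omega> \<partial>count_space UNIV)
        = (\<integral>\<^sup>+x. (indicator H x * f \<omega>) * indicator {X \<omega>} x \<partial>count_space UNIV)"
      by (intro nn_integral_cong) (auto simp: indicator_def)
    also have "\<dots> = indicator H (X \<omega>) * f \<omega>" by simp
    also have "\<dots> = f \<omega> * indicator {\<omega>\<in>space M. X \<omega> \<in> H} \<omega>"
      using \<omega> by (simp add: indicator_def)
    finally show "(\<integral>\<^sup>+x. indicator H x * f \<omega> * indicator {\<omega>\<in>space M. X \<omega> = x} \<omega> \<partial>count_space UNIV)
        = f \<omega> * indicator {\<omega>\<in>space M. X \<omega> \<in> H} \<omega>" .
  qed
  finally show ?thesis ..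
qed

locale countable_markov_chain = prob_space M for M :: "'a measure" +
  fixes z :: "nat \<Rightarrow> 'a \<Rightarrow> 'b::countable" and Pi :: "'b \<Rightarrow> 'b \<Rightarrow> real"
  assumes measurable_z[measurable]: "\<And>n. z n \<in> measurable M (count_space UNIV)"
    and markov: "\<And>n s. measure M {\<omega> \<in> space M. \<forall>i\<le>Suc n. z i \<omega> = s i}
      = measure M {\<omega> \<in> space M. \<forall>i\<le>n. z i \<omega> = s i} * Pi (s n) (s (Suc n))"
begin

lemma measurable_history[measurable]: "history z n \<in> measurable M (count_space UNIV)"
proof (induction n)
  case 0
  have "(\<lambda>\<omega>. [z 0 \<omega>]) \<in> measurable M (count_space UNIV)"
    using measurable_compose[OF measurable_z[of 0], of "\<lambda>x. [x]"] by simp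
  then show ?case by (simp add: history_def[abs_def])
next
  case (Suc n)
  have "history z (Suc n) = (\<lambda>\<omega>. (\<lambda>(l, x). l @ [x]) (history z n \<omega>, z (Suc n) \<omega>))"
    by (auto simp: history_def)
  then show ?case
    by (simp only:) (rule measurable_compose[OF measurable_Pair[OF Suc measurable_z]], simp)
qed

lemma measure_history_Suc:
  assumes "length l = Suc n"
  shows "measure M {\<omega> \<in> space M. history z n \<omega> = l \<and> z (Suc n) \<omega> = y'}
    = measure M {\<omega> \<in> space M. history z n \<omega> = l} * Pi (last l) y'"
proof -
  define s where "s i = (if i \<le> n then l ! i else y')" for i
  have "{\<omega> \<in> space M. \<forall>i\<le>Suc n. z i \<omega> = s i} = {\<omega> \<in> space M. history z n \<omega> = l \<and> z (Suc n) \<omega> = y'}"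
    using assms by (auto simp: history_eq_iff s_def le_Suc_eq)
  moreover have "{\<omega> \<in> space M. \<forall>i\<le>n. z i \<omega> = s i} = {\<omega> \<in> space M. history z n \<omega> = l}"
    using assms by (auto simp: history_eq_iff s_def)
  moreover have "s n = last l" "s (Suc n) = y'"
    using last_eq_nth_of_length[OF assms] by (simp_all add: s_def)
  ultimately show ?thesis using markov[of n s] by simp
qed

lemma exists_history_positive:
  assumes "0 < measure M {\<omega> \<in> space M. z n \<omega> = y}"
  obtains l where "length l = Suc n" "last l = y" "0 < measure M {\<omega> \<in> space M. history z n \<omega> = l}"
proof -
  have "\<exists>l. length l = Suc n \<and> last l = y \<and> 0 < measure M {\<omega> \<in> space M. history z n \<omega> = l}"
  proof (rule ccontr)
    assume "\<not> ?thesis"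
    then have null: "{\<omega> \<in> space M. history z n \<omega> = l} \<in> null_sets M"
      if "l \<in> {l. length l = Suc n \<and> last l = y}" for l
      using that by (auto simp: null_sets_def emeasure_eq_measure zero_less_measure_iff)
    have "{\<omega> \<in> space M. z n \<omega> = y}
        = (\<Union>l\<in>{l. length l = Suc n \<and> last l = y}. {\<omega> \<in> space M. history z n \<omega> = l})"
      by (auto simp: last_history)
    also have "\<dots> \<in> null_sets M" by (intro null_sets_UN' null) auto
    finally show False using assms by (simp add: measure_eq_0_null_sets)
  qed
  then show thesis using that by blast
qed

lemma kernel_eq_0_off_steps:
  assumes steps: "AE \<omega> in M. T (z n \<omega>) (z (Suc n) \<omega>)"
    and reached: "0 < measure M {\<omega> \<in> space M. z n \<omega> = y}" and "\<not> T y y'"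
  shows "Pi y y' = 0"
proof -
  obtain l where l: "length l = Suc n" "last l = y"
    and pos: "0 < measure M {\<omega> \<in> space M. history z n \<omega> = l}"
    using exists_history_positive[OF reached] .
  have "AE \<omega> in M. \<not> (history z n \<omega> = l \<and> z (Suc n) \<omega> = y')"
    using steps by eventually_elim (metis l(2) last_history \<open>\<not> T y y'\<close>)
  then have "emeasure M {\<omega> \<in> space M. history z n \<omega> = l \<and> z (Suc n) \<omega> = y'} = 0"
    by (subst (asm) AE_iff_measurable[OF _ refl]) simp_all
  then have "measure M {\<omega> \<in> space M. history z n \<omega> = l \<and> z (Suc n) \<omega> = y'} = 0"
    by (simp add: measure_def)
  then show ?thesis
    using measure_history_Suc[OF l(1), of y'] pos l(2) by simp
qed

lemma nn_integral_next_on_history: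
  fixes F :: "'b \<Rightarrow> ennreal"
  assumes "length l = Suc n"
  shows "(\<integral>\<^sup>+\<omega>. F (z (Suc n) \<omega>) * indicator {\<omega> \<in> space M. history z n \<omega> = l} \<omega> \<partial>M)
    = emeasure M {\<omega> \<in> space M. history z n \<omega> = l}
      * (\<integral>\<^sup>+y'. ennreal (Pi (last l) y') * F y' \<partial>count_space UNIV)"
proof -
  let ?E = "{\<omega> \<in> space M. history z n \<omega> = l}"
  have "(\<integral>\<^sup>+\<omega>. F (z (Suc n) \<omega>) * indicator ?E \<omega> \<partial>M)
      = (\<integral>\<^sup>+y'. (\<integral>\<^sup>+\<omega>. F (z (Suc n) \<omega>) * indicator ?E \<omega> * indicator {\<omega>\<in>space M. z (Suc n) \<omega> = y'} \<omega> \<partial>M) \<partial>count_space UNIV)"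
    using nn_integral_split_countable[of "z (Suc n)" M "\<lambda>\<omega>. F (z (Suc n) \<omega>) * indicator ?E \<omega>" UNIV] by simp
  also have "\<dots> = (\<integral>\<^sup>+y'. F y' * emeasure M {\<omega> \<in> space M. history z n \<omega> = l \<and> z (Suc n) \<omega> = y'} \<partial>count_space UNIV)"
  proof (rule nn_integral_cong)
    fix y'
    have "(\<integral>\<^sup>+\<omega>. F (z (Suc n) \<omega>) * indicator ?E \<omega> * indicator {\<omega>\<in>space M. z (Suc n) \<omega> = y'} \<omega> \<partial>M)
        = (\<integral>\<^sup>+\<omega>. F y' * indicator {\<omega> \<in> space M. history z n \<omega> = l \<and> z (Suc n) \<omega> = y'} \<omega> \<partial>M)"
      by (intro nn_integral_cong) (auto simp: indicator_def)
    then show "(\<integral>\<^sup>+\<omega>. F (z (Suc n) \<omega>) * indicator ?E \<omega> * indicator {\<omega>\<in>space M. z (Suc n) \<omega> = y'} \<omega> \<partial>M)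
        = F y' * emeasure M {\<omega> \<in> space M. history z n \<omega> = l \<and> z (Suc n) \<omega> = y'}"
      by (simp add: nn_integral_cmult_indicator)
  qed
  also have "\<dots> = (\<integral>\<^sup>+y'. emeasure M ?E * (ennreal (Pi (last l) y') * F y') \<partial>count_space UNIV)"
    by (intro nn_integral_cong)
      (simp add: emeasure_eq_measure measure_history_Suc[OF assms] ennreal_mult'' mult_ac)
  also have "\<dots> = emeasure M ?E * (\<integral>\<^sup>+y'. ennreal (Pi (last l) y') * F y' \<partial>count_space UNIV)"
    by (rule nn_integral_cmult) simp
  finally show ?thesis .
qed

lemma nn_integral_current_on_history:
  "(\<integral>\<^sup>+\<omega>. F (z n \<omega>) * indicator {\<omega> \<in> space M. history z n \<omega> = l} \<omega> \<partial>M)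
    = F (last l) * emeasure M {\<omega> \<in> space M. history z n \<omega> = l}"
proof -
  have "(\<integral>\<^sup>+\<omega>. F (z n \<omega>) * indicator {\<omega> \<in> space M. history z n \<omega> = l} \<omega> \<partial>M)
      = (\<integral>\<^sup>+\<omega>. F (last l) * indicator {\<omega> \<in> space M. history z n \<omega> = l} \<omega> \<partial>M)"
    by (intro nn_integral_cong) (auto simp: indicator_def last_history)
  then show ?thesis by (simp add: nn_integral_cmult_indicator)
qed

lemma nn_integral_next_le_current_on_history:
  fixes F :: "'b \<Rightarrow> ennreal"
  assumes superharmonic: "\<And>y. y \<in> G \<Longrightarrow> 0 < measure M {\<omega> \<in> space M. z n \<omega> = y} \<Longrightarrow>
      (\<integral>\<^sup>+y'. ennreal (Pi y y') * F y' \<partial>count_space UNIV) \<le> F y"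
    and G: "length l = Suc n \<Longrightarrow> last l \<in> G"
  shows "(\<integral>\<^sup>+\<omega>. F (z (Suc n) \<omega>) * indicator {\<omega> \<in> space M. history z n \<omega> = l} \<omega> \<partial>M)
    \<le> (\<integral>\<^sup>+\<omega>. F (z n \<omega>) * indicator {\<omega> \<in> space M. history z n \<omega> = l} \<omega> \<partial>M)"
proof (cases "length l = Suc n \<and> 0 < measure M {\<omega> \<in> space M. history z n \<omega> = l}")
  case True
  have "measure M {\<omega> \<in> space M. history z n \<omega> = l} \<le> measure M {\<omega> \<in> space M. z n \<omega> = last l}"
    by (intro finite_measure_mono) (auto simp: last_history)
  then have "0 < measure M {\<omega> \<in> space M. z n \<omega> = last l}" using True by linarith
  then have "(\<integral>\<^sup>+y'. ennreal (Pi (last l) y') * F y' \<partial>count_space UNIV) \<le> F (last l)"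
    using True G by (intro superharmonic) auto
  then show ?thesis
    using True
    by (simp add: nn_integral_next_on_history nn_integral_current_on_history
        mult.commute[of "F (last l)"] mult_left_mono)
next
  case False
  have "{\<omega> \<in> space M. history z n \<omega> = l} \<in> null_sets M"
  proof (cases "length l = Suc n")
    case True
    with False show ?thesis by (auto simp: null_sets_def emeasure_eq_measure zero_less_measure_iff)
  next
    case False
    then have "{\<omega> \<in> space M. history z n \<omega> = l} = {}" by auto
    then show ?thesis by (simp only: null_sets.empty_sets)
  qed
  then show ?thesis by (simp add: nn_integral_null_set)
qed

lemma nn_integral_next_le_current:
  fixes F :: "'b \<Rightarrow> ennreal"
  assumes superharmonic: "\<And>y. y \<in> G \<Longrightarrow> 0 < measure M {\<omega> \<in> space M. z n \<omega> = y} \<Longrightarrow>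
      (\<integral>\<^sup>+y'. ennreal (Pi y y') * F y' \<partial>count_space UNIV) \<le> F y"
    and G: "\<And>l. l \<in> H \<Longrightarrow> length l = Suc n \<Longrightarrow> last l \<in> G"
  shows "(\<integral>\<^sup>+\<omega>. F (z (Suc n) \<omega>) * indicator {\<omega> \<in> space M. history z n \<omega> \<in> H} \<omega> \<partial>M)
    \<le> (\<integral>\<^sup>+\<omega>. F (z n \<omega>) * indicator {\<omega> \<in> space M. history z n \<omega> \<in> H} \<omega> \<partial>M)"
proof -
  have split: "(\<integral>\<^sup>+\<omega>. F (z i \<omega>) * indicator {\<omega> \<in> space M. history z n \<omega> \<in> H} \<omega> \<partial>M)
      = (\<integral>\<^sup>+l. indicator H l
          * (\<integral>\<^sup>+\<omega>. F (z i \<omega>) * indicator {\<omega> \<in> space M. history z n \<omega> = l} \<omega> \<partial>M) \<partial>count_space UNIV)"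
    for i by (rule nn_integral_split_countable) measurable
  show ?thesis
    unfolding split
  proof (intro nn_integral_mono)
    fix l
    show "indicator H l * (\<integral>\<^sup>+\<omega>. F (z (Suc n) \<omega>) * indicator {\<omega> \<in> space M. history z n \<omega> = l} \<omega> \<partial>M)
      \<le> indicator H l * (\<integral>\<^sup>+\<omega>. F (z n \<omega>) * indicator {\<omega> \<in> space M. history z n \<omega> = l} \<omega> \<partial>M)"
    proof (cases "l \<in> H")
      case True
      then show ?thesis
        using nn_integral_next_le_current_on_history[OF superharmonic G[OF True]] by (simp add: mult_left_mono)
    qed simp
  qed
qed

text \<open>Superharmonicity is only required at states reached with positive probability: elsewhere
  the chain does not determine \<open>Pi\<close>. Stopping \<open>F (z (N + n))\<close> at the first exit from \<open>G\<close> after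
  time \<open>N\<close>, on the event \<open>z N = y0\<close>, gives a nonnegative supermartingale with mean at most \<open>F y0\<close>.\<close>

lemma nn_integral_stopped_le:
  fixes F :: "'b \<Rightarrow> ennreal"
  assumes superharmonic: "\<And>n y. y \<in> G \<Longrightarrow> 0 < measure M {\<omega> \<in> space M. z n \<omega> = y} \<Longrightarrow>
      (\<integral>\<^sup>+y'. ennreal (Pi y y') * F y' \<partial>count_space UNIV) \<le> F y"
  shows "(\<integral>\<^sup>+\<omega>. F (z (N + n) \<omega>)
    * indicator {\<omega> \<in> space M. z N \<omega> = y0 \<and> (\<forall>i\<in>{N..N + n}. z i \<omega> \<in> G)} \<omega> \<partial>M) \<le> F y0"
proof (induction n)
  case 0
  have "(\<integral>\<^sup>+\<omega>. F (z (N + 0) \<omega>)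
      * indicator {\<omega> \<in> space M. z N \<omega> = y0 \<and> (\<forall>i\<in>{N..N + 0}. z i \<omega> \<in> G)} \<omega> \<partial>M) \<le> (\<integral>\<^sup>+\<omega>. F y0 \<partial>M)"
    by (intro nn_integral_mono) (auto simp: indicator_def)
  then show ?case by (simp add: emeasure_space_1)
next
  case (Suc n)
  let ?H = "{l. l ! N = y0 \<and> (\<forall>i\<in>{N..N + n}. l ! i \<in> G)}"
  have stopped_history: "{\<omega> \<in> space M. z N \<omega> = y0 \<and> (\<forall>i\<in>{N..N + n}. z i \<omega> \<in> G)}
      = {\<omega> \<in> space M. history z (N + n) \<omega> \<in> ?H}"
    by (auto simp: nth_history)
  have "(\<integral>\<^sup>+\<omega>. F (z (N + Suc n) \<omega>)
        * indicator {\<omega> \<in> space M. z N \<omega> = y0 \<and> (\<forall>i\<in>{N..N + Suc n}. z i \<omega> \<in> G)} \<omega> \<partial>M)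
      \<le> (\<integral>\<^sup>+\<omega>. F (z (Suc (N + n)) \<omega>) * indicator {\<omega> \<in> space M. history z (N + n) \<omega> \<in> ?H} \<omega> \<partial>M)"
    unfolding stopped_history[symmetric] by (intro nn_integral_mono) (auto simp: indicator_def)
  also have "\<dots> \<le> (\<integral>\<^sup>+\<omega>. F (z (N + n) \<omega>) * indicator {\<omega> \<in> space M. history z (N + n) \<omega> \<in> ?H} \<omega> \<partial>M)"
    by (rule nn_integral_next_le_current[OF superharmonic]) (auto simp: last_eq_nth_of_length)
  finally show ?case using Suc unfolding stopped_history by order
qed

lemma AE_liminf_stopped_finite:
  fixes F :: "'b \<Rightarrow> ennreal"
  assumes F_finite: "F y0 < \<top>"
    and superharmonic: "\<And>n y. y \<in> G \<Longrightarrow> 0 < measure M {\<omega> \<in> space M. z n \<omega> = y} \<Longrightarrow>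
      (\<integral>\<^sup>+y'. ennreal (Pi y y') * F y' \<partial>count_space UNIV) \<le> F y"
  shows "AE \<omega> in M. liminf (\<lambda>n. F (z (N + n) \<omega>)
    * indicator {\<omega> \<in> space M. z N \<omega> = y0 \<and> (\<forall>i\<in>{N..N + n}. z i \<omega> \<in> G)} \<omega>) \<noteq> \<infinity>"
proof (rule nn_integral_PInf_AE)
  let ?g = "\<lambda>n \<omega>. F (z (N + n) \<omega>)
    * indicator {\<omega> \<in> space M. z N \<omega> = y0 \<and> (\<forall>i\<in>{N..N + n}. z i \<omega> \<in> G)} \<omega>"
  have "(\<integral>\<^sup>+\<omega>. liminf (\<lambda>n. ?g n \<omega>) \<partial>M) \<le> liminf (\<lambda>n. integral\<^sup>N M (?g n))"
    by (rule nn_integral_liminf) measurable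
  also have "\<dots> \<le> F y0"
    by (intro Liminf_le) (simp_all add: nn_integral_stopped_le[OF superharmonic])
  finally show "(\<integral>\<^sup>+\<omega>. liminf (\<lambda>n. ?g n \<omega>) \<partial>M) \<noteq> \<infinity>"
    using F_finite by (auto simp: top_unique)
qed measurable

theorem AE_not_tendsto_top_of_superharmonic:
  fixes F :: "'b \<Rightarrow> ennreal"
  assumes F_finite: "\<And>y. F y < \<top>"
    and superharmonic: "\<And>n y. y \<in> G \<Longrightarrow> 0 < measure M {\<omega> \<in> space M. z n \<omega> = y} \<Longrightarrow>
      (\<integral>\<^sup>+y'. ennreal (Pi y y') * F y' \<partial>count_space UNIV) \<le> F y"
  shows "AE \<omega> in M. \<not> ((\<forall>\<^sub>F n in sequentially. z n \<omega> \<in> G) \<and> (\<lambda>n. F (z n \<omega>)) \<longlonglongrightarrow> \<top>)"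
proof -
  have "AE \<omega> in M. \<forall>N y0. liminf (\<lambda>n. F (z (N + n) \<omega>)
      * indicator {\<omega> \<in> space M. z N \<omega> = y0 \<and> (\<forall>i\<in>{N..N + n}. z i \<omega> \<in> G)} \<omega>) \<noteq> \<infinity>"
    using AE_liminf_stopped_finite[OF F_finite superharmonic] by (simp add: AE_all_countable)
  with AE_space show ?thesis
  proof eventually_elim
    case (elim \<omega>)
    show ?case
    proof
      assume "(\<forall>\<^sub>F n in sequentially. z n \<omega> \<in> G) \<and> (\<lambda>n. F (z n \<omega>)) \<longlonglongrightarrow> \<top>"
      then obtain N where G: "\<And>n. N \<le> n \<Longrightarrow> z n \<omega> \<in> G" and lim: "(\<lambda>n. F (z n \<omega>)) \<longlonglongrightarrow> \<top>"
        by (auto simp: eventually_sequentially)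
      have "(\<lambda>n. F (z (N + n) \<omega>)
          * indicator {x \<in> space M. z N x = z N \<omega> \<and> (\<forall>i\<in>{N..N + n}. z i x \<in> G)} \<omega>) \<longlonglongrightarrow> \<top>"
        using LIMSEQ_ignore_initial_segment[OF lim, of N] elim(1) G by (simp add: add.commute)
      then have "liminf (\<lambda>n. F (z (N + n) \<omega>)
          * indicator {x \<in> space M. z N x = z N \<omega> \<and> (\<forall>i\<in>{N..N + n}. z i x \<in> G)} \<omega>) = \<top>"
        by (rule lim_imp_Liminf[rotated]) simp
      then show False using elim(2) by simp
    qed
  qed
qed

end

theorem proposition2:
  fixes M :: "'a measure"
    and z :: "nat \<Rightarrow> 'a \<Rightarrow> int ^ 'k::finite"
    and Pi :: "int ^ 'k \<Rightarrow> int ^ 'k \<Rightarrow> real"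
    and p :: "int ^ 'k \<Rightarrow> real ^ 'k \<Rightarrow> real"
    and m :: nat and a :: real
    and K :: "(real ^ 'k) set"
  assumes prob: "prob_space M"
    and meas: "\<And>n. z n \<in> measurable M (count_space UNIV)"
    and state: "\<And>n. AE \<omega> in M. z n \<omega> \<in> Zplus"
    and kernel_nonneg: "\<And>y y'. 0 \<le> Pi y y'"
    and kernel_sum: "\<And>y. y \<in> Zplus \<Longrightarrow> (Pi y has_sum 1) UNIV"
    and markov: "\<And>n (s :: nat \<Rightarrow> int ^ 'k).
        measure M {\<omega> \<in> space M. \<forall>i\<le>Suc n. z i \<omega> = s i}
      = measure M {\<omega> \<in> space M. \<forall>i\<le>n. z i \<omega> = s i} * Pi (s n) (s (Suc n))"
    and m_pos: "1 \<le> m"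
    and A1: "\<And>n. AE \<omega> in M. norm1 (z (Suc n) \<omega> - z n \<omega>) \<le> int m"
    and p_range: "\<And>w x. norm1 w \<le> int m \<Longrightarrow> x \<in> std_simplex_k \<Longrightarrow> 0 \<le> p w x \<and> p w x \<le> 1"
    and p_lip: "\<And>w. norm1 w \<le> int m \<Longrightarrow> \<exists>C. C-lipschitz_on std_simplex_k (p w)"
    and a_pos: "0 < a"
    and A2: "\<And>y w. y \<in> Zplus \<Longrightarrow> y \<noteq> 0 \<Longrightarrow> norm1 w \<le> int m \<Longrightarrow>
        \<bar>p w (distrib y) - Pi y (y + w)\<bar> \<le> a / real_of_int (norm1 y)"
    and K_compact: "compact K"
    and K_sub: "K \<subseteq> std_simplex_k"
    and drift: "\<exists>c<0. \<forall>x\<in>K.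
        (\<Sum>w\<in>{w. norm1 w \<le> int m}. p w x * real_of_int (alpha w)) \<le> c"
  shows "AE \<omega> in M. \<not> (limit_points (\<lambda>n. distrib (z n \<omega>)) \<subseteq> K
              \<and> filterlim (\<lambda>n. norm1 (z n \<omega>)) at_top sequentially)"
proof -
  interpret countable_markov_chain M z Pi
    by (intro countable_markov_chain.intro countable_markov_chain_axioms.intro prob meas markov)
  obtain \<theta> \<delta> R where \<theta>: "0 < \<theta>" and \<delta>: "0 < \<delta>" and superharmonic: "\<forall>y\<in>Zplus.
      R \<le> real_of_int (norm1 y) \<longrightarrow> (\<exists>x\<in>K. dist (distrib y) x < \<delta>) \<longrightarrow>
      (\<forall>y'. \<not> norm1 (y' - y) \<le> int m \<longrightarrow> Pi y y' = 0) \<longrightarrow>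
      (\<integral>\<^sup>+y'. ennreal (Pi y y') * ennreal (exp (\<theta> * real_of_int (alpha y'))) \<partial>count_space UNIV)
        \<le> ennreal (exp (\<theta> * real_of_int (alpha y)))"
    using exp_alpha_superharmonic_near_K[OF kernel_nonneg kernel_sum m_pos p_lip a_pos A2 K_sub drift]
    by blast
  define G where "G = {y \<in> Zplus. R \<le> real_of_int (norm1 y) \<and> (\<exists>x\<in>K. dist (distrib y) x < \<delta>)}"
  have "AE \<omega> in M. \<not> ((\<forall>\<^sub>F n in sequentially. z n \<omega> \<in> G)
      \<and> (\<lambda>n. ennreal (exp (\<theta> * real_of_int (alpha (z n \<omega>))))) \<longlonglongrightarrow> \<top>)"
  proof (rule AE_not_tendsto_top_of_superharmonic)
    fix n y assume "y \<in> G" and reached: "0 < measure M {\<omega> \<in> space M. z n \<omega> = y}"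
    with superharmonic show "(\<integral>\<^sup>+y'. ennreal (Pi y y') * ennreal (exp (\<theta> * real_of_int (alpha y')))
        \<partial>count_space UNIV) \<le> ennreal (exp (\<theta> * real_of_int (alpha y)))"
      using kernel_eq_0_off_steps[where T="\<lambda>y y'. norm1 (y' - y) \<le> int m", OF A1 reached]
      unfolding G_def by blast
  qed simp
  moreover have "AE \<omega> in M. \<forall>n. z n \<omega> \<in> Zplus" using state by (simp add: AE_all_countable)
  ultimately show ?thesis
  proof eventually_elim
    case (elim \<omega>)
    then have "\<And>n. z n \<omega> \<in> Zplus" by blast
    with elim(1) show ?case
      using eventually_large_near_K[of "\<lambda>n. z n \<omega>" K \<delta> R] exp_alpha_tendsto_top[of "\<lambda>n. z n \<omega>" \<theta>] \<delta> \<theta>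
      unfolding G_def by blast
  qed
qed

end
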